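(* Let $C_{TS}>0$ be a fixed absolute constant and, for a problem instance, let $N_{TS}=C_{TS}\,\varepsilon_{TS}^{-2}\log(\delta_{TS}^{-1})$ where $\varepsilon_{TS}=\min_{i,j\in[K]}\mathbb E[(\mu_i-\mu_j)_+]$ and $\delta_{TS}=\min_{i\in[K]}\Pr[A^*=i]$. Fix $M\geq 1$. Suppose each prior $\mathcal P_i$, $i\in[K]$, is a $\mathrm{Beta}(\alpha_i,\beta_i)$ distribution with $\alpha_i,\beta_i\in[1,M]$. Then $N_{TS}=O_M(\log K)$, i.e. $N_{TS}\leq c_M\log K$ for $K\geq 2$, where $c_M$ depends only on $M$ (and $C_{TS}$).
   Context: A problem instance consists of $K$ arms with mean rewards $\mu_1,\dots,\mu_K\in[0,1]$ drawn independently, $\mu_i\sim\mathcal P_i$. $A^*=\min(\arg\max_j\mu_j)$. $(x)_+=\max(x,0)$. *)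

theory Defs
  imports "HOL-Probability.Probability"
begin

text \<open>Density of the Beta(a,b) distribution on [0,1] (set to 0 at the two
endpoints, a Lebesgue-null set, to avoid the convention 0 powr 0 = 0).\<close>
definition beta_pdf :: "real \<Rightarrow> real \<Rightarrow> real \<Rightarrow> real" where
  "beta_pdf a b x =
     (if 0 < x \<and> x < 1 then x powr (a - 1) * (1 - x) powr (b - 1) / Beta a b else 0)"

definition beta_measure :: "real \<Rightarrow> real \<Rightarrow> real measure" where
  "beta_measure a b = density lborel (\<lambda>x. ennreal (beta_pdf a b x))"

definition instance_measure :: "nat \<Rightarrow> (nat \<Rightarrow> real) \<Rightarrow> (nat \<Rightarrow> real) \<Rightarrow> (nat \<Rightarrow> real) measure" where
  "instance_measure K \<alpha> \<beta> = PiM {..<K} (\<lambda>i. beta_measure (\<alpha> i) (\<beta> i))"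

definition best_arm :: "nat \<Rightarrow> (nat \<Rightarrow> real) \<Rightarrow> nat" where
  "best_arm K \<mu> = Min {i \<in> {..<K}. \<forall>j<K. \<mu> j \<le> \<mu> i}"

definition pos_part :: "real \<Rightarrow> real" where
  "pos_part x = max x 0"

definition eps_TS :: "nat \<Rightarrow> (nat \<Rightarrow> real) measure \<Rightarrow> real" where
  "eps_TS K P = Min {(\<integral>\<mu>. pos_part (\<mu> i - \<mu> j) \<partial>P) | i j. i < K \<and> j < K \<and> i \<noteq> j}"

definition delta_TS :: "nat \<Rightarrow> (nat \<Rightarrow> real) measure \<Rightarrow> real" where
  "delta_TS K P = Min {measure P {\<mu> \<in> space P. best_arm K \<mu> = i} | i. i < K}"

definition N_TS :: "real \<Rightarrow> nat \<Rightarrow> (nat \<Rightarrow> real) measure \<Rightarrow> real" where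
  "N_TS C K P = C * (eps_TS K P) powr (-2) * ln (1 / delta_TS K P)"

end

theory Submission
  imports Defs
begin

text \<open>
  For parameters in \<open>[1, M]\<close> the Beta density is at most \<open>1 / B(M, M)\<close>, and at least
  \<open>(x (1 - x)) powr (M - 1)\<close> on \<open>(0, 1)\<close>. Hence for any two arms \<open>i, j\<close> the event
  \<open>\<mu>\<^sub>i \<in> [5/8, 7/8], \<mu>\<^sub>j \<in> [1/8, 3/8]\<close>, on which \<open>\<mu>\<^sub>i - \<mu>\<^sub>j \<ge> 1/4\<close>, has probability
  bounded below in terms of \<open>M\<close> alone, and hence so is \<open>\<epsilon>\<^sub>T\<^sub>S\<close>. For \<open>\<delta>\<^sub>T\<^sub>S\<close> put
  \<open>t = B(M, M) / (2K)\<close>: arm \<open>i\<close> is the unique best arm once \<open>\<mu>\<^sub>i \<ge> 1 - t\<close> and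
  \<open>\<mu>\<^sub>k < 1 - t\<close> for all \<open>k \<noteq> i\<close>. The first event has probability at least
  \<open>(t/2) (t/4) powr (M - 1)\<close>, each of the others at least \<open>1 - 1/(2K)\<close>, so by Bernoulli's
  inequality \<open>\<delta>\<^sub>T\<^sub>S \<ge> (B(M, M) / (8K)) powr M\<close>, whence \<open>ln (1 / \<delta>\<^sub>T\<^sub>S) = O(log K)\<close>
  with a constant depending on \<open>M\<close> only.
\<close>

lemma integral_eq_0_or_ge_measure:
  fixes f :: "'a \<Rightarrow> real"
  assumes "finite_measure M" "E \<in> sets M" "0 \<le> c"
    and "\<And>x. x \<in> space M \<Longrightarrow> 0 \<le> f x" "\<And>x. x \<in> E \<Longrightarrow> c \<le> f x"
  shows "integral\<^sup>L M f = 0 \<or> c * measure M E \<le> integral\<^sup>L M f"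
proof (cases "integrable M f")
  case True
  interpret finite_measure M by (rule assms(1))
  have "c * measure M E = (\<integral>x. c * indicator E x \<partial>M)"
    using assms(2) by simp
  also have "\<dots> \<le> integral\<^sup>L M f"
    using assms by (intro integral_mono'[OF True]) (auto simp: indicator_def)
  finally show ?thesis ..
qed (simp add: not_integrable_integral_eq)

lemma half_le_power_one_minus_inverse:
  assumes "1 \<le> n"
  shows "1/2 \<le> (1 - 1 / (2 * real n)) ^ (n - 1)"
proof -
  have "1/2 \<le> 1 + real (n - 1) * (- 1 / (2 * real n))"
    using assms by (simp add: field_simps of_nat_diff)
  also have "\<dots> \<le> (1 + (- 1 / (2 * real n))) ^ (n - 1)"
    using assms by (intro Bernoulli_inequality) (simp add: field_simps)
  finally show ?thesis by simp
qed

lemma ln_mult_le_mult_ln: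
  fixes a x :: real
  assumes "1 \<le> a" "2 \<le> x"
  shows "ln (a * x) \<le> (ln a / ln 2 + 1) * ln x"
proof -
  have "ln a = (ln a / ln 2) * ln 2"
    by simp
  also have "\<dots> \<le> (ln a / ln 2) * ln x"
    using assms by (intro mult_left_mono) auto
  finally show ?thesis
    using assms by (simp add: ln_mult distrib_right)
qed

lemma Beta_real_pos: "0 < a \<Longrightarrow> 0 < b \<Longrightarrow> 0 < Beta a (b::real)"
  by (simp add: Beta_def Gamma_real_pos)

lemma Beta_real_le_1:
  fixes a b :: real
  assumes "1 \<le> a" "1 \<le> b"
  shows "Beta a b \<le> 1"
proof -
  have "Beta 1 1 = (1::real)"
    by (simp add: Beta_def Gamma_plus1[of 1, simplified])
  then show ?thesis
    using Beta_real_mono[of 1 a 1 b] assms by simp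
qed

lemma borel_measurable_beta_pdf [measurable]: "beta_pdf a b \<in> borel_measurable borel"
  unfolding beta_pdf_def by measurable

lemma space_beta_measure [simp]: "space (beta_measure a b) = UNIV"
  by (simp add: beta_measure_def)

lemma sets_beta_measure [simp, measurable_cong]: "sets (beta_measure a b) = sets borel"
  by (simp add: beta_measure_def)

lemma emeasure_beta_measure:
  "A \<in> sets borel \<Longrightarrow>
     emeasure (beta_measure a b) A = (\<integral>\<^sup>+x. ennreal (beta_pdf a b x) * indicator A x \<partial>lborel)"
  unfolding beta_measure_def by (subst emeasure_density) auto

lemma prob_space_beta_measure:
  fixes a b :: real
  assumes "0 < a" "0 < b"
  shows "prob_space (beta_measure a b)"
proof (rule prob_spaceI)
  let ?f = "\<lambda>x. x powr (a - 1) * (1 - x) powr (b - 1) / Beta a b"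
  have f_integral: "(?f has_integral 1) {0<..<1}"
    using has_integral_divide[OF has_integral_Beta_real[OF assms], of "Beta a b"]
      Beta_real_pos[OF assms]
    by (simp add: has_integral_Icc_iff_Ioo)
  have "(\<integral>\<^sup>+x. ennreal (indicator {0<..<1} x * ?f x) \<partial>lborel) = 1"
    using nn_integral_has_integral_lebesgue[OF _ f_integral] Beta_real_pos[OF assms] by simp
  moreover have "ennreal (beta_pdf a b x) * indicator UNIV x = ennreal (indicator {0<..<1} x * ?f x)"
    for x
    by (simp add: beta_pdf_def indicator_def)
  ultimately show "emeasure (beta_measure a b) (space (beta_measure a b)) = 1"
    by (simp add: emeasure_beta_measure del: indicator_UNIV)
qed

lemma beta_pdf_le:
  fixes a b M x :: real
  assumes "1 \<le> a" "a \<le> M" "1 \<le> b" "b \<le> M"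
  shows "beta_pdf a b x \<le> 1 / Beta M M"
proof (cases "0 < x \<and> x < 1")
  case True
  have pos: "0 < Beta M M" using assms by (simp add: Beta_real_pos)
  have "x powr (a - 1) * (1 - x) powr (b - 1) \<le> 1"
    using True assms by (intro mult_le_one powr_le1) auto
  then have "beta_pdf a b x \<le> 1 / Beta a b"
    using True assms Beta_real_pos[of a b] by (simp add: beta_pdf_def divide_right_mono)
  also have "\<dots> \<le> 1 / Beta M M"
    using assms pos by (intro divide_left_mono Beta_real_mono) (auto simp: Beta_real_pos)
  finally show ?thesis .
qed (use assms Beta_real_pos[of M M] in \<open>auto simp: beta_pdf_def\<close>)

lemma beta_pdf_ge:
  fixes a b M x :: real
  assumes "1 \<le> a" "a \<le> M" "1 \<le> b" "b \<le> M" "0 < x" "x < 1"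
  shows "(x * (1 - x)) powr (M - 1) \<le> beta_pdf a b x"
proof -
  have "(x * (1 - x)) powr (M - 1) = x powr (M - 1) * (1 - x) powr (M - 1)"
    using assms by (simp add: powr_mult)
  also have "\<dots> \<le> x powr (a - 1) * (1 - x) powr (b - 1)"
    using assms by (intro mult_mono powr_mono') auto
  also have "\<dots> \<le> x powr (a - 1) * (1 - x) powr (b - 1) / Beta a b"
    using assms Beta_real_le_1[of a b] Beta_real_pos[of a b]
    by (simp add: le_divide_eq mult_left_le)
  finally show ?thesis
    using assms by (simp add: beta_pdf_def)
qed

lemma measure_beta_interval_ge:
  fixes a b M u v c :: real
  assumes "1 \<le> a" "a \<le> M" "1 \<le> b" "b \<le> M" "0 < u" "u \<le> v" "v < 1" "0 \<le> c"
    and "\<And>x. x \<in> {u..v} \<Longrightarrow> c \<le> x * (1 - x)"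
  shows "(v - u) * c powr (M - 1) \<le> measure (beta_measure a b) {u..v}"
proof -
  interpret prob_space "beta_measure a b"
    using assms by (intro prob_space_beta_measure) auto
  have pdf_ge: "c powr (M - 1) \<le> beta_pdf a b x" if "x \<in> {u..v}" for x
  proof -
    have "c powr (M - 1) \<le> (x * (1 - x)) powr (M - 1)"
      using assms that by (intro powr_mono2) auto
    also have "\<dots> \<le> beta_pdf a b x"
      using assms that by (intro beta_pdf_ge) auto
    finally show ?thesis .
  qed
  have "ennreal ((v - u) * c powr (M - 1)) = (\<integral>\<^sup>+x. ennreal (c powr (M - 1)) * indicator {u..v} x \<partial>lborel)"
    using assms by (subst nn_integral_cmult_indicator) (auto simp: ennreal_mult mult.commute)
  also have "\<dots> \<le> (\<integral>\<^sup>+x. ennreal (beta_pdf a b x) * indicator {u..v} x \<partial>lborel)"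
    using pdf_ge by (intro nn_integral_mono) (auto simp: indicator_def intro: ennreal_leI)
  also have "\<dots> = ennreal (measure (beta_measure a b) {u..v})"
    by (simp add: emeasure_beta_measure[symmetric] emeasure_eq_measure)
  finally show ?thesis
    by (simp add: ennreal_le_iff[OF measure_nonneg])
qed

lemma measure_beta_atLeast_le:
  fixes a b M w :: real
  assumes "1 \<le> a" "a \<le> M" "1 \<le> b" "b \<le> M" "w \<le> 1"
  shows "measure (beta_measure a b) {w..} \<le> (1 - w) / Beta M M"
proof -
  interpret prob_space "beta_measure a b"
    using assms by (intro prob_space_beta_measure) auto
  have "ennreal (measure (beta_measure a b) {w..})
      = (\<integral>\<^sup>+x. ennreal (beta_pdf a b x) * indicator {w..} x \<partial>lborel)"
    by (simp add: emeasure_beta_measure[symmetric] emeasure_eq_measure)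
  also have "\<dots> \<le> (\<integral>\<^sup>+x. ennreal (1 / Beta M M) * indicator {w..1} x \<partial>lborel)"
  proof (intro nn_integral_mono)
    fix x
    have "ennreal (beta_pdf a b x) \<le> ennreal (1 / Beta M M)"
      using beta_pdf_le[OF assms(1-4)] by (rule ennreal_leI)
    moreover have "beta_pdf a b x = 0" if "1 < x"
      using that by (simp add: beta_pdf_def)
    ultimately show "ennreal (beta_pdf a b x) * indicator {w..} x \<le> ennreal (1 / Beta M M) * indicator {w..1} x"
      by (auto simp: indicator_def)
  qed
  also have "\<dots> = ennreal ((1 - w) / Beta M M)"
    using assms Beta_real_pos[of M M]
    by (simp add: nn_integral_cmult_indicator ennreal_mult'[symmetric])
  finally show ?thesis
    using assms Beta_real_pos[of M M] by (simp add: ennreal_le_iff)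
qed

lemma measure_beta_atLeast_ge:
  fixes a b M t :: real
  assumes "1 \<le> a" "a \<le> M" "1 \<le> b" "b \<le> M" "0 < t" "t \<le> 1/2"
  shows "(t / 2) * (t / 4) powr (M - 1) \<le> measure (beta_measure a b) {1 - t..}"
proof -
  interpret prob_space "beta_measure a b"
    using assms by (intro prob_space_beta_measure) auto
  have "x * (1 - x) \<ge> (1/2) * (t/2)" if "x \<in> {1 - t..1 - t/2}" for x
    using that assms by (intro mult_mono) auto
  then have "((1 - t/2) - (1 - t)) * (t / 4) powr (M - 1) \<le> measure (beta_measure a b) {1 - t..1 - t/2}"
    using assms by (intro measure_beta_interval_ge) auto
  also have "\<dots> \<le> measure (beta_measure a b) {1 - t..}"
    by (intro finite_measure_mono) auto
  finally show ?thesis by simp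
qed

lemma space_instance_measure: "space (instance_measure K \<alpha> \<beta>) = PiE {..<K} (\<lambda>_. UNIV)"
  by (simp add: instance_measure_def space_PiM)

lemma prob_space_instance_measure:
  "(\<And>k. k < K \<Longrightarrow> 0 < \<alpha> k \<and> 0 < \<beta> k) \<Longrightarrow> prob_space (instance_measure K \<alpha> \<beta>)"
  unfolding instance_measure_def by (intro prob_space_PiM prob_space_beta_measure) auto

lemma measure_instance_measure_PiE:
  assumes "\<And>k. k < K \<Longrightarrow> 0 < \<alpha> k \<and> 0 < \<beta> k" "\<And>k. k < K \<Longrightarrow> X k \<in> sets borel"
  shows "measure (instance_measure K \<alpha> \<beta>) (PiE {..<K} X)
           = (\<Prod>k<K. measure (beta_measure (\<alpha> k) (\<beta> k)) (X k))"
proof -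
  \<comment> \<open>The product locale wants every factor to be a probability space, not only those below \<open>K\<close>.\<close>
  define B where "B k = (if k < K then beta_measure (\<alpha> k) (\<beta> k) else beta_measure 1 1)" for k
  have "prob_space (B k)" for k
    using assms(1) by (simp add: B_def prob_space_beta_measure)
  then have "product_prob_space B"
    by (rule product_prob_spaceI)
  then interpret finite_product_prob_space B "{..<K}"
    by (simp add: finite_product_prob_space_def finite_product_sigma_finite_def
        finite_product_sigma_finite_axioms_def product_prob_space.axioms(1))
  have "instance_measure K \<alpha> \<beta> = PiM {..<K} B"
    unfolding instance_measure_def B_def by (rule PiM_cong) auto
  moreover have "measure (PiM {..<K} B) (PiE {..<K} X) = (\<Prod>k<K. measure (B k) (X k))"
    by (rule prob_times) (simp add: B_def assms(2))
  ultimately show ?thesis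
    by (auto simp: B_def intro!: prod.cong)
qed

lemma measure_beta_quarter_interval_ge:
  fixes a b M u :: real
  assumes "1 \<le> a" "a \<le> M" "1 \<le> b" "b \<le> M" "1/8 \<le> u" "u \<le> 5/8"
  shows "(1/4) * (7/64) powr (M - 1) \<le> measure (beta_measure a b) {u..u + 1/4}"
proof -
  have "7/64 \<le> x * (1 - x)" if "x \<in> {u..u + 1/4}" for x
  proof -
    have "0 \<le> (x - 1/8) * (7/8 - x)"
      using that assms by (intro mult_nonneg_nonneg) auto
    also have "\<dots> = x * (1 - x) - 7/64"
      by (simp add: field_simps)
    finally show ?thesis by simp
  qed
  then show ?thesis
    using measure_beta_interval_ge[OF assms(1-4), of u "u + 1/4" "7/64"] assms by simp
qed

lemma expectation_pos_part_diff_ge: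
  fixes M :: real
  assumes params: "\<forall>k<K. 1 \<le> \<alpha> k \<and> \<alpha> k \<le> M \<and> 1 \<le> \<beta> k \<and> \<beta> k \<le> M"
    and ij: "i < K" "j < K" "i \<noteq> j"
  shows "(\<integral>\<mu>. pos_part (\<mu> i - \<mu> j) \<partial>instance_measure K \<alpha> \<beta>) = 0 \<or>
         (1/4) * ((1/4) * (7/64) powr (M - 1))\<^sup>2
           \<le> (\<integral>\<mu>. pos_part (\<mu> i - \<mu> j) \<partial>instance_measure K \<alpha> \<beta>)"
proof -
  define P where "P = instance_measure K \<alpha> \<beta>"
  define m where "m k = measure (beta_measure (\<alpha> k) (\<beta> k))" for k
  define X where "X k = (if k = i then {5/8..7/8::real} else if k = j then {1/8..3/8} else UNIV)" for k
  have pos: "\<And>k. k < K \<Longrightarrow> 0 < \<alpha> k \<and> 0 < \<beta> k"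
    using params by force
  interpret prob_space P
    unfolding P_def using pos by (rule prob_space_instance_measure)
  have sets_E: "PiE {..<K} X \<in> sets P"
    unfolding P_def instance_measure_def by (intro sets_PiM_I_finite) (auto simp: X_def)
  have "measure P (PiE {..<K} X) = (\<Prod>k<K. m k (X k))"
    unfolding P_def m_def using pos by (intro measure_instance_measure_PiE) (auto simp: X_def)
  also have "\<dots> = (\<Prod>k\<in>{i, j}. m k (X k))"
    using ij pos prob_space.prob_space[OF prob_space_beta_measure]
    by (intro prod.mono_neutral_right) (auto simp: m_def X_def)
  also have "\<dots> = m i {5/8..7/8} * m j {1/8..3/8}"
    using ij by (simp add: X_def)
  finally have measure_E: "measure P (PiE {..<K} X) = m i {5/8..7/8} * m j {1/8..3/8}" .
  have "((1/4) * (7/64) powr (M - 1))\<^sup>2 \<le> m i {5/8..5/8 + 1/4} * m j {1/8..1/8 + 1/4}"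
    unfolding power2_eq_square m_def using params ij
    by (intro mult_mono measure_beta_quarter_interval_ge) auto
  then have "((1/4) * (7/64) powr (M - 1))\<^sup>2 \<le> measure P (PiE {..<K} X)"
    by (simp add: measure_E)
  moreover have "1/4 \<le> pos_part (\<mu> i - \<mu> j)" if "\<mu> \<in> PiE {..<K} X" for \<mu>
  proof -
    have "\<mu> i \<in> X i" "\<mu> j \<in> X j"
      using that ij by auto
    then show ?thesis
      using ij by (auto simp: X_def pos_part_def)
  qed
  ultimately show ?thesis
    using integral_eq_0_or_ge_measure[OF finite_measure_axioms sets_E, of "1/4" "\<lambda>\<mu>. pos_part (\<mu> i - \<mu> j)"]
    unfolding P_def by (force simp: pos_part_def)
qed

lemma measure_beta_lessThan_ge:
  fixes a b M t :: real
  assumes "1 \<le> a" "a \<le> M" "1 \<le> b" "b \<le> M" "0 \<le> t"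
  shows "1 - t / Beta M M \<le> measure (beta_measure a b) {..<1 - t}"
proof -
  interpret prob_space "beta_measure a b"
    using assms by (intro prob_space_beta_measure) auto
  have "measure (beta_measure a b) {..<1 - t} = 1 - measure (beta_measure a b) {1 - t..}"
    using prob_compl[of "{1 - t..}"] by (simp add: Compl_eq_Diff_UNIV[symmetric] not_le)
  then show ?thesis
    using measure_beta_atLeast_le[OF assms(1-4), of "1 - t"] assms by simp
qed

lemma best_arm_eqI:
  assumes "i < K" "\<And>k. k < K \<Longrightarrow> k \<noteq> i \<Longrightarrow> \<mu> k < \<mu> i"
  shows "best_arm K \<mu> = i"
proof -
  have "{k \<in> {..<K}. \<forall>j<K. \<mu> j \<le> \<mu> k} = {i}"
  proof (intro equalityI subsetI)
    fix k assume k: "k \<in> {k \<in> {..<K}. \<forall>j<K. \<mu> j \<le> \<mu> k}"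
    show "k \<in> {i}"
    proof (rule ccontr)
      assume "k \<notin> {i}"
      then have "\<mu> k < \<mu> i" using k assms(2) by auto
      with k assms(1) show False by auto
    qed
  qed (use assms in \<open>auto simp: le_less\<close>)
  then show ?thesis
    by (simp add: best_arm_def)
qed

lemma measure_best_arm_ge:
  fixes M :: real
  assumes params: "\<forall>k<K. 1 \<le> \<alpha> k \<and> \<alpha> k \<le> M \<and> 1 \<le> \<beta> k \<and> \<beta> k \<le> M"
    and i: "i < K"
  defines "P \<equiv> instance_measure K \<alpha> \<beta>"
  shows "measure P {\<mu> \<in> space P. best_arm K \<mu> = i} = 0 \<or>
         (Beta M M / (8 * real K)) powr M \<le> measure P {\<mu> \<in> space P. best_arm K \<mu> = i}"
proof -
  define t where "t = Beta M M / (2 * real K)"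
  define m where "m k = measure (beta_measure (\<alpha> k) (\<beta> k))" for k
  define Y where "Y k = (if k = i then {1 - t..} else {..<1 - t})" for k
  have M: "1 \<le> M"
    using params i by force
  have pos: "\<And>k. k < K \<Longrightarrow> 0 < \<alpha> k \<and> 0 < \<beta> k"
    using params by force
  have t: "0 < t" "t \<le> 1/2"
    using i M Beta_real_pos[of M M] Beta_real_le_1[of M M]
    by (auto simp: t_def field_simps)
  interpret prob_space P
    unfolding P_def using pos by (rule prob_space_instance_measure)
  have winner_best: "PiE {..<K} Y \<subseteq> {\<mu> \<in> space P. best_arm K \<mu> = i}"
  proof safe
    fix \<mu> assume \<mu>: "\<mu> \<in> PiE {..<K} Y"
    then show "\<mu> \<in> space P"
      by (auto simp: P_def space_instance_measure)
    show "best_arm K \<mu> = i"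
    proof (rule best_arm_eqI[OF i])
      fix k assume "k < K" "k \<noteq> i"
      moreover have "\<mu> k \<in> Y k" "\<mu> i \<in> Y i"
        using \<mu> i \<open>k < K\<close> by auto
      ultimately show "\<mu> k < \<mu> i"
        by (simp add: Y_def)
    qed
  qed
  have measure_box: "measure P (PiE {..<K} Y) = m i (Y i) * (\<Prod>k\<in>{..<K} - {i}. m k (Y k))"
    unfolding P_def m_def using pos i
    by (subst measure_instance_measure_PiE) (auto simp: Y_def prod.remove)
  have winner: "(t / 2) * (t / 4) powr (M - 1) \<le> m i (Y i)"
    using params i t measure_beta_atLeast_ge[of "\<alpha> i" M "\<beta> i" t] by (simp add: m_def Y_def)
  have losers: "1/2 \<le> (\<Prod>k\<in>{..<K} - {i}. m k (Y k))"
  proof -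
    have "1 - 1 / (2 * real K) \<le> m k (Y k)" if "k \<in> {..<K} - {i}" for k
      using measure_beta_lessThan_ge[of "\<alpha> k" M "\<beta> k" t] params that t Beta_real_pos[of M M]
      by (auto simp: m_def Y_def t_def)
    then have "(1 - 1 / (2 * real K)) ^ (K - 1) \<le> (\<Prod>k\<in>{..<K} - {i}. m k (Y k))"
      using i prod_mono[of "{..<K} - {i}" "\<lambda>_. 1 - 1 / (2 * real K)"] by simp
    then show ?thesis
      using half_le_power_one_minus_inverse[of K] i by simp
  qed
  have "(t / 2) * (t / 4) powr (M - 1) * (1/2) \<le> measure P (PiE {..<K} Y)"
    unfolding measure_box by (rule mult_mono[OF winner losers]) (auto simp: m_def)
  also have "(t / 2) * (t / 4) powr (M - 1) * (1/2) = (Beta M M / (8 * real K)) powr M"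
    using t powr_mult_base[of "t / 4" "M - 1"] by (simp add: t_def)
  finally have "(Beta M M / (8 * real K)) powr M \<le> measure P (PiE {..<K} Y)" .
  then show ?thesis
    using finite_measure_mono[OF winner_best] measure_notin_sets[of _ P] by force
qed

lemma eps_TS_attained:
  assumes "2 \<le> K"
  obtains i j where "i < K" "j < K" "i \<noteq> j" "eps_TS K P = (\<integral>\<mu>. pos_part (\<mu> i - \<mu> j) \<partial>P)"
proof -
  let ?E = "\<lambda>(i, j). \<integral>\<mu>. pos_part (\<mu> i - \<mu> j) \<partial>P"
  have values_eq: "{(\<integral>\<mu>. pos_part (\<mu> i - \<mu> j) \<partial>P) | i j. i < K \<and> j < K \<and> i \<noteq> j}
      = ?E ` {(i, j). i < K \<and> j < K \<and> i \<noteq> j}"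
    by auto
  have "finite {(i, j). i < K \<and> j < K \<and> i \<noteq> (j::nat)}"
    by (rule finite_subset[of _ "{..<K} \<times> {..<K}"]) auto
  moreover have "(0, 1) \<in> {(i, j). i < K \<and> j < K \<and> i \<noteq> (j::nat)}"
    using assms by auto
  ultimately have "eps_TS K P \<in> ?E ` {(i, j). i < K \<and> j < K \<and> i \<noteq> j}"
    unfolding eps_TS_def values_eq by (intro Min_in) auto
  then show ?thesis
    using that by auto
qed

lemma delta_TS_attained:
  assumes "0 < K"
  obtains i where "i < K" "delta_TS K P = measure P {\<mu> \<in> space P. best_arm K \<mu> = i}"
proof -
  have values_eq: "{measure P {\<mu> \<in> space P. best_arm K \<mu> = i} | i. i < K}
      = (\<lambda>i. measure P {\<mu> \<in> space P. best_arm K \<mu> = i}) ` {..<K}"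
    by auto
  have "delta_TS K P \<in> (\<lambda>i. measure P {\<mu> \<in> space P. best_arm K \<mu> = i}) ` {..<K}"
    unfolding delta_TS_def values_eq using assms by (intro Min_in) auto
  then show ?thesis
    using that by auto
qed

text \<open>
  The alternatives \<open>eps_TS K P = 0\<close> and \<open>delta_TS K P = 0\<close> absorb the junk values of a
  non-integrable expectation and of a non-measurable event; there \<open>N_TS C K P = 0\<close>, since
  \<open>0 powr -2 = 0\<close> and \<open>ln (1 / 0) = 0\<close>.
\<close>
lemma N_TS_le:
  assumes "0 \<le> C" "0 < e" "0 < d" "d \<le> 1"
    and "eps_TS K P = 0 \<or> e \<le> eps_TS K P" "delta_TS K P = 0 \<or> d \<le> delta_TS K P"
  shows "N_TS C K P \<le> C * e powr (-2) * ln (1 / d)"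
proof -
  have bound_nonneg: "0 \<le> C * e powr (-2) * ln (1 / d)"
    using assms by simp
  consider "eps_TS K P = 0 \<or> delta_TS K P = 0" | "e \<le> eps_TS K P" "d \<le> delta_TS K P"
    using assms by blast
  then show ?thesis
  proof cases
    case 1
    then show ?thesis
      using bound_nonneg by (auto simp: N_TS_def)
  next
    case 2
    have eps_factor: "C * eps_TS K P powr (-2) \<le> C * e powr (-2)"
      using assms 2 by (intro mult_left_mono powr_mono2') auto
    have delta_factor: "ln (1 / delta_TS K P) \<le> ln (1 / d)"
      using assms 2 by (simp add: frac_le)
    show ?thesis
    proof (cases "ln (1 / delta_TS K P) \<le> 0")
      case True
      have "N_TS C K P \<le> 0"
        unfolding N_TS_def using assms True by (intro mult_nonneg_nonpos) auto
      then show ?thesis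
        using bound_nonneg by linarith
    next
      case False
      then show ?thesis
        using assms unfolding N_TS_def by (intro mult_mono[OF eps_factor delta_factor]) auto
    qed
  qed
qed

theorem corollary3p4:
  fixes C_TS M :: real
  assumes "C_TS > 0" and "M \<ge> 1"
  shows "\<exists>c. \<forall>(K::nat) (\<alpha>::nat \<Rightarrow> real) (\<beta>::nat \<Rightarrow> real).
           K \<ge> 2 \<longrightarrow>
           (\<forall>i<K. 1 \<le> \<alpha> i \<and> \<alpha> i \<le> M \<and> 1 \<le> \<beta> i \<and> \<beta> i \<le> M) \<longrightarrow>
           N_TS C_TS K (instance_measure K \<alpha> \<beta>) \<le> c * ln (real K)"
proof (intro exI allI impI)
  fix K :: nat and \<alpha> \<beta> :: "nat \<Rightarrow> real"
  assume K: "K \<ge> 2" and params: "\<forall>i<K. 1 \<le> \<alpha> i \<and> \<alpha> i \<le> M \<and> 1 \<le> \<beta> i \<and> \<beta> i \<le> M"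
  define P where "P = instance_measure K \<alpha> \<beta>"
  define e where "e = (1/4) * ((1/4) * (7/64) powr (M - 1))\<^sup>2"
  define d where "d = (Beta M M / (8 * real K)) powr M"
  have Beta_MM: "0 < Beta M M" "Beta M M \<le> 1"
    using assms by (simp_all add: Beta_real_pos Beta_real_le_1)
  obtain i j where "i < K" "j < K" "i \<noteq> j" "eps_TS K P = (\<integral>\<mu>. pos_part (\<mu> i - \<mu> j) \<partial>P)"
    using eps_TS_attained K .
  then have "eps_TS K P = 0 \<or> e \<le> eps_TS K P"
    using expectation_pos_part_diff_ge[OF params] by (simp add: P_def e_def)
  moreover obtain i' where "i' < K" "delta_TS K P = measure P {\<mu> \<in> space P. best_arm K \<mu> = i'}"
    using delta_TS_attained K by (metis less_le_trans pos2)
  then have "delta_TS K P = 0 \<or> d \<le> delta_TS K P"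
    using measure_best_arm_ge[OF params] by (simp add: P_def d_def)
  moreover have "0 < d" "d \<le> 1"
    using K Beta_MM assms by (auto simp: d_def powr_le1)
  ultimately have "N_TS C_TS K P \<le> C_TS * e powr (-2) * ln (1 / d)"
    using assms by (intro N_TS_le) (auto simp: e_def)
  moreover have "ln (1 / d) \<le> M * ((ln (8 / Beta M M) / ln 2 + 1) * ln (real K))"
  proof -
    have "ln (1 / d) = M * ln (8 / Beta M M * real K)"
      using K Beta_MM by (simp add: d_def ln_powr ln_div ln_mult algebra_simps)
    also have "\<dots> \<le> M * ((ln (8 / Beta M M) / ln 2 + 1) * ln (real K))"
      using K Beta_MM assms by (intro mult_left_mono ln_mult_le_mult_ln) auto
    finally show ?thesis .
  qed
  ultimately show "N_TS C_TS K (instance_measure K \<alpha> \<beta>) \<le>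
      C_TS * e powr (-2) * M * (ln (8 / Beta M M) / ln 2 + 1) * ln (real K)"
    using assms unfolding P_def
    by (smt (verit, best) mult.assoc mult_left_mono powr_ge_zero)
qed

end
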